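(* Let $K$ be a field of odd characteristic $p$ with algebraic closure $\bar K$. Suppose that $f\in K[X]$ satisfies $f\sim_{\bar K} X^p-2X^{(p+1)/2}+X$. Then $f\sim_K X^p-2aX^{(p+1)/2}+a^2X$ for some $a\in K$.
   Context: For a field extension $E$ of $K$ and $f,h\in K[X]$ (or $h\in E[X]$), write $f\sim_E h$ if there are polynomials $L,R\in E[X]$ of degree $1$ with $f(X)=L(h(R(X)))$. *)

theory Defs
  imports "HOL-Computational_Algebra.Polynomial" "HOL-Algebra.Algebraic_Closure_Type"
begin

text \<open>f ~_E h: there are degree-1 polynomials L, R over E with f = L(h(R(X))).
  Here both polynomials are taken over the field E itself; the K-polynomials are
  mapped into E via the field embedding.\<close>
definition lin_equiv :: "'a::field poly \<Rightarrow> 'a poly \<Rightarrow> bool" where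
  "lin_equiv f h \<longleftrightarrow>
     (\<exists>L R. degree L = 1 \<and> degree R = 1 \<and> f = pcompose L (pcompose h R))"

end

theory Submission
  imports Defs
begin

(* Over the algebraic closure write f = L(h(R(X))) with h = X^p - 2X^q + X, q = (p+1)/2,
   L = uX + v and R = rX + s.  Since h(rX) = r^p h_a(X) for h_a = X^p - 2aX^q + a^2X and
   a = r^(-m), m = (p-1)/2, this becomes f = A h_a(X + t) + v with A = u r^p and t = s/r, and
   it remains to show that A, a, t and v lie in K.  A is the leading coefficient of f.  In
   characteristic p the derivative of h_a is a^2 - aX^m, so f' = A a^2 - A a (X + t)^m: its
   leading coefficient gives a, then (X + t)^m has coefficients in K, and its coefficient
   m t of X^(m-1) gives t because 0 < m < p.  Finally v = f(-t). *)

definition hpoly :: "nat \<Rightarrow> 'a::comm_ring_1 \<Rightarrow> 'a poly" where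
  "hpoly p a = monom 1 p - monom (2 * a) ((p + 1) div 2) + monom (a ^ 2) 1"

lemma map_poly_to_ac_add: "map_poly to_ac (f + g) = map_poly to_ac f + map_poly to_ac g"
  by (simp add: poly_eq_iff coeff_map_poly)

lemma map_poly_to_ac_diff: "map_poly to_ac (f - g) = map_poly to_ac f - map_poly to_ac g"
  by (simp add: poly_eq_iff coeff_map_poly)

lemma map_poly_to_ac_mult: "map_poly to_ac (f * g) = map_poly to_ac f * map_poly to_ac g"
  by (simp add: poly_eq_iff coeff_map_poly coeff_mult to_ac_sum)

lemma map_poly_to_ac_pCons: "map_poly to_ac (pCons c f) = pCons (to_ac c) (map_poly to_ac f)"
  by (simp add: map_poly_pCons)

lemma map_poly_to_ac_pcompose:
  "map_poly to_ac (f \<circ>\<^sub>p g) = map_poly to_ac f \<circ>\<^sub>p map_poly to_ac g"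
  by (induction f)
     (simp_all add: pcompose_pCons map_poly_to_ac_add map_poly_to_ac_mult map_poly_to_ac_pCons)

lemma map_poly_to_ac_pderiv: "map_poly to_ac (pderiv f) = pderiv (map_poly to_ac f)"
  by (simp add: poly_eq_iff coeff_map_poly coeff_pderiv)

lemma map_poly_to_ac_hpoly: "map_poly to_ac (hpoly p a) = hpoly p (to_ac a)"
  by (simp add: hpoly_def map_poly_to_ac_add map_poly_to_ac_diff map_poly_monom)

lemma poly_map_poly_to_ac: "poly (map_poly to_ac f) (to_ac x) = to_ac (poly f x)"
  by (induction f) (simp_all add: map_poly_to_ac_pCons)

lemma map_poly_to_ac_inj: "map_poly to_ac f = map_poly to_ac g \<Longrightarrow> f = g"
  by (simp add: poly_eq_iff coeff_map_poly)

lemma range_to_ac_divide: "x \<in> range to_ac \<Longrightarrow> y \<in> range to_ac \<Longrightarrow> x / y \<in> range to_ac"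
  by (auto simp flip: to_ac_divide)

lemma coeff_map_poly_to_ac_in_range: "coeff (map_poly to_ac f) k \<in> range to_ac"
  by (simp add: coeff_map_poly)

lemma pcompose_monom: "monom c n \<circ>\<^sub>p q = smult c (q ^ n)"
  by (induction n) (simp_all add: monom_altdef pcompose_smult pcompose_mult pcompose_pCons)

lemma pcompose_monom_scale:
  fixes c r :: "'a::comm_semiring_1"
  shows "monom c n \<circ>\<^sub>p [:0, r:] = monom (c * r ^ n) n"
  by (rule poly_eqI) (simp add: coeff_pcompose_linear coeff_monom mult.commute)

lemma hpoly_pcompose_scale:
  fixes r :: "'a::field"
  assumes "r \<noteq> 0" and "odd p"
  shows "hpoly p 1 \<circ>\<^sub>p [:0, r:] = smult (r ^ p) (hpoly p (inverse (r ^ (p div 2))))"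
proof -
  obtain m where p: "p = 2 * m + 1" and m: "p div 2 = m" and q: "(p + 1) div 2 = m + 1"
    using \<open>odd p\<close> by (auto elim!: oddE)
  define a where "a = inverse (r ^ m)"
  have "r ^ p = r ^ (m + 1) * r ^ m" and "r ^ p = r * r ^ m * r ^ m"
    unfolding p mult_2 power_add by (simp_all add: ac_simps)
  then have "r ^ p * a = r ^ (m + 1)" and "r ^ p * a ^ 2 = r"
    using \<open>r \<noteq> 0\<close> by (simp_all add: a_def power2_eq_square field_simps)
  then have "smult (r ^ p) (hpoly p a) = monom (r ^ p) p - monom (2 * r ^ (m + 1)) (m + 1) + monom r 1"
    unfolding hpoly_def q by (simp add: smult_diff_right smult_add_right smult_monom mult.left_commute)
  also have "\<dots> = hpoly p 1 \<circ>\<^sub>p [:0, r:]"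
    unfolding hpoly_def q by (simp add: pcompose_diff pcompose_add pcompose_monom_scale)
  finally show ?thesis
    by (simp add: m a_def)
qed

lemma
  fixes a :: "'a::comm_ring_1"
  assumes "odd p" and "p > 1"
  shows degree_hpoly: "degree (hpoly p a) = p" and lead_coeff_hpoly: "lead_coeff (hpoly p a) = 1"
proof -
  have "(p + 1) div 2 < p" and "1 < p"
    using assms by (auto elim!: oddE)
  then have coeff: "coeff (hpoly p a) k = (if k = p then 1 else 0)" if "k \<ge> (p + 1) div 2 + 1" for k
    using that by (auto simp: hpoly_def coeff_monom)
  show "degree (hpoly p a) = p"
  proof (rule antisym)
    show "degree (hpoly p a) \<le> p"
      by (rule degree_le) (use coeff \<open>(p + 1) div 2 < p\<close> in auto)
    show "p \<le> degree (hpoly p a)"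
      by (rule le_degree) (use coeff \<open>(p + 1) div 2 < p\<close> in auto)
  qed
  then show "lead_coeff (hpoly p a) = 1"
    using coeff \<open>(p + 1) div 2 < p\<close> by simp
qed

lemma pderiv_hpoly:
  fixes a :: "'a::field"
  assumes "CHAR('a) = p" and "odd p"
  shows "pderiv (hpoly p a) = [:a ^ 2:] - monom a (p div 2)"
proof -
  obtain m where p: "p = 2 * m + 1" and m: "p div 2 = m" and q: "(p + 1) div 2 = m + 1"
    using \<open>odd p\<close> by (auto elim!: oddE)
  have "(of_nat p :: 'a) = 0"
    using assms(1) by (metis of_nat_CHAR)
  moreover have "(of_nat (m + 1) * 2 :: 'a) = of_nat p + 1"
    unfolding p by (simp add: algebra_simps)
  ultimately have "of_nat (m + 1) * (2 * a) = a"
    by (metis mult.assoc mult_1 add_0)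
  then show ?thesis
    unfolding hpoly_def q m using \<open>of_nat p = 0\<close>
    by (simp add: pderiv_monom pderiv_add pderiv_diff monom_0)
qed

lemma lin_equiv_hpoly_normal_form:
  fixes F :: "'a::field poly"
  assumes "lin_equiv F (hpoly p 1)" and "odd p"
  obtains v A a t where "A \<noteq> 0" and "a \<noteq> 0" and "F = [:v, A:] \<circ>\<^sub>p (hpoly p a \<circ>\<^sub>p [:t, 1:])"
proof -
  obtain L R where "degree L = 1" "degree R = 1" and F: "F = L \<circ>\<^sub>p (hpoly p 1 \<circ>\<^sub>p R)"
    using assms(1) by (auto simp: lin_equiv_def)
  obtain v u where L: "L = [:v, u:]" and "u \<noteq> 0"
    using \<open>degree L = 1\<close> by (rule degree1_coeffs)
  obtain s r where R: "R = [:s, r:]" and "r \<noteq> 0"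
    using \<open>degree R = 1\<close> by (rule degree1_coeffs)
  define a where "a = inverse (r ^ (p div 2))"
  have "R = [:0, r:] \<circ>\<^sub>p [:s / r, 1:]"
    using \<open>r \<noteq> 0\<close> by (simp add: R pcompose_pCons)
  then have "hpoly p 1 \<circ>\<^sub>p R = smult (r ^ p) (hpoly p a \<circ>\<^sub>p [:s / r, 1:])"
    using \<open>r \<noteq> 0\<close> \<open>odd p\<close>
    by (simp add: pcompose_assoc hpoly_pcompose_scale pcompose_smult a_def)
  then have "F = [:v, u * r ^ p:] \<circ>\<^sub>p (hpoly p a \<circ>\<^sub>p [:s / r, 1:])"
    by (simp add: F L pcompose_pCons)
  moreover have "u * r ^ p \<noteq> 0" and "a \<noteq> 0"
    using \<open>u \<noteq> 0\<close> \<open>r \<noteq> 0\<close> by (simp_all add: a_def)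
  ultimately show ?thesis
    using that by blast
qed

lemma pderiv_hpoly_normal_form:
  fixes a :: "'a::field"
  assumes "CHAR('a) = p" and "odd p"
  shows "pderiv ([:v, A:] \<circ>\<^sub>p (hpoly p a \<circ>\<^sub>p [:t, 1:]))
           = [:A * a ^ 2:] - smult (A * a) ([:t, 1:] ^ (p div 2))"
  using assms by (simp add: pderiv_pcompose pderiv_pCons pderiv_hpoly pcompose_diff pcompose_monom
      smult_diff_right)

lemma coeff_hpoly_normal_form_top:
  fixes a :: "'a::field"
  assumes "odd p" and "p > 1"
  shows "coeff ([:v, A:] \<circ>\<^sub>p (hpoly p a \<circ>\<^sub>p [:t, 1:])) p = A"
proof -
  have "lead_coeff (hpoly p a \<circ>\<^sub>p [:t, 1:]) = 1"
    using assms by (simp add: lead_coeff_comp lead_coeff_hpoly del: pCons_one)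
  moreover have "degree (hpoly p a \<circ>\<^sub>p [:t, 1:]) = p"
    using assms by (simp add: degree_pcompose degree_hpoly)
  ultimately show ?thesis
    using \<open>p > 1\<close> by (simp add: pcompose_pCons coeff_pCons split: nat.split)
qed

lemma in_range_to_ac_if_linear_power_coeffs:
  fixes t :: "'a::field alg_closure"
  assumes "\<And>k. coeff ([:t, 1:] ^ m) k \<in> range to_ac" and "(of_nat m :: 'a) \<noteq> 0"
  shows "t \<in> range to_ac"
proof -
  have "m \<noteq> 0"
    using assms(2) by (metis of_nat_0)
  then have "m choose (m - 1) = m" and "m - (m - 1) = 1"
    using binomial_symmetric[of 1 m] by simp_all
  moreover have "(of_nat m :: 'a alg_closure) \<noteq> 0"
    using assms(2) by (metis to_ac_of_nat to_ac_eq_0_iff)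
  ultimately have "t = coeff ([:t, 1:] ^ m) (m - 1) / of_nat m"
    by (simp add: coeff_linear_poly_power)
  also have "\<dots> \<in> range to_ac"
    using assms(1) by (intro range_to_ac_divide) (auto simp flip: to_ac_of_nat)
  finally show ?thesis .
qed

lemma hpoly_normal_form_params_in_range:
  fixes f :: "'a::field poly"
  assumes "CHAR('a) = p" and "odd p"
    and f: "map_poly to_ac f = [:v, A:] \<circ>\<^sub>p (hpoly p a \<circ>\<^sub>p [:t, 1:])"
    and "A \<noteq> 0" and "a \<noteq> 0"
  shows "A \<in> range to_ac" and "a \<in> range to_ac" and "t \<in> range to_ac" and "v \<in> range to_ac"
proof -
  define m where "m = p div 2"
  have char: "CHAR('a alg_closure) = p"
    using assms(1) by simp
  have "p > 1"
    using assms(1,2) by (metis CHAR_not_1 One_nat_def odd_pos less_one nat_neq_iff)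
  then have "0 < m" and "m < p"
    using \<open>odd p\<close> by (auto simp: m_def elim!: oddE)
  then have "(of_nat m :: 'a) \<noteq> 0"
    using assms(1) by (auto simp: of_nat_eq_0_iff_char_dvd dest: dvd_imp_le)
  have f': "pderiv (map_poly to_ac f) = [:A * a ^ 2:] - smult (A * a) ([:t, 1:] ^ m)"
    unfolding f m_def using char \<open>odd p\<close> by (rule pderiv_hpoly_normal_form)
  have "coeff (map_poly to_ac f) p = A"
    unfolding f using \<open>odd p\<close> \<open>p > 1\<close> by (rule coeff_hpoly_normal_form_top)
  then show "A \<in> range to_ac"
    by (metis coeff_map_poly_to_ac_in_range)
  moreover have "A * a \<in> range to_ac"
  proof -
    have "coeff (pderiv (map_poly to_ac f)) m = - (A * a)"
      using \<open>0 < m\<close> by (simp add: f' coeff_linear_power coeff_pCons split: nat.split)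
    then have "A * a = to_ac (- coeff (pderiv f) m)"
      by (simp add: coeff_map_poly flip: map_poly_to_ac_pderiv)
    then show ?thesis
      by blast
  qed
  ultimately show a: "a \<in> range to_ac"
    using range_to_ac_divide[of "A * a" A] \<open>A \<noteq> 0\<close> by simp
  obtain A0 a0 where "A = to_ac A0" and "a = to_ac a0"
    using \<open>A \<in> range to_ac\<close> a by blast
  have "[:t, 1:] ^ m = smult (inverse (A * a)) ([:A * a ^ 2:] - pderiv (map_poly to_ac f))"
    using \<open>A \<noteq> 0\<close> \<open>a \<noteq> 0\<close> by (simp add: f' field_simps)
  also have "\<dots> = map_poly to_ac (smult (inverse (A0 * a0)) ([:A0 * a0 ^ 2:] - pderiv f))"
    by (simp add: \<open>A = to_ac A0\<close> \<open>a = to_ac a0\<close> map_poly_smult map_poly_to_ac_diff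
        map_poly_to_ac_pderiv map_poly_to_ac_pCons)
  finally have "coeff ([:t, 1:] ^ m) k \<in> range to_ac" for k
    by (simp only: coeff_map_poly_to_ac_in_range)
  then show t: "t \<in> range to_ac"
    using \<open>of_nat m \<noteq> 0\<close> by (rule in_range_to_ac_if_linear_power_coeffs)
  then obtain T where "t = to_ac T"
    by blast
  have "poly (hpoly p a) 0 = 0"
    using \<open>p > 1\<close> by (simp add: hpoly_def poly_monom power_0_left)
  then have "v = to_ac (poly f (- T))"
    by (simp flip: poly_map_poly_to_ac add: f poly_pcompose \<open>t = to_ac T\<close>)
  then show "v \<in> range to_ac"
    by simp
qed

theorem lemma2p9:
  fixes f :: "'a::field poly" and p :: nat
  assumes "CHAR('a) = p" and "odd p"
    and "lin_equiv (map_poly to_ac f)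
           (monom 1 p - monom 2 ((p + 1) div 2) + monom 1 1 :: 'a alg_closure poly)"
  shows "\<exists>a::'a. lin_equiv f (monom 1 p - monom (2 * a) ((p + 1) div 2) + monom (a^2) 1)"
proof -
  have "lin_equiv (map_poly to_ac f) (hpoly p 1)"
    using assms(3) by (simp add: hpoly_def)
  then obtain v A a t where "A \<noteq> 0" and "a \<noteq> 0"
    and F: "map_poly to_ac f = [:v, A:] \<circ>\<^sub>p (hpoly p a \<circ>\<^sub>p [:t, 1:])"
    using \<open>odd p\<close> by (rule lin_equiv_hpoly_normal_form)
  then have "v \<in> range to_ac" and "A \<in> range to_ac" and "a \<in> range to_ac" and "t \<in> range to_ac"
    using hpoly_normal_form_params_in_range[OF assms(1,2)] by simp_all
  then obtain V A0 a0 T where "v = to_ac V" and "A = to_ac A0" and "a = to_ac a0" and "t = to_ac T"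
    by blast
  then have "map_poly to_ac f = map_poly to_ac ([:V, A0:] \<circ>\<^sub>p (hpoly p a0 \<circ>\<^sub>p [:T, 1:]))"
    by (simp add: F map_poly_to_ac_pcompose map_poly_to_ac_pCons map_poly_to_ac_hpoly)
  then have "f = [:V, A0:] \<circ>\<^sub>p (hpoly p a0 \<circ>\<^sub>p [:T, 1:])"
    by (rule map_poly_to_ac_inj)
  moreover have "A0 \<noteq> 0"
    using \<open>A \<noteq> 0\<close> \<open>A = to_ac A0\<close> by simp
  ultimately have "lin_equiv f (hpoly p a0)"
    unfolding lin_equiv_def by (intro exI[of _ "[:V, A0:]"] exI[of _ "[:T, 1:]"]) simp
  then show ?thesis
    unfolding hpoly_def by blast
qed

end
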